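(* Every instance of the Balancing with Conflicts game with $n$ players and $m$ machines satisfies: - if $n\ge m$, it is $\left(2-\frac1m+\frac{m-1}{n},\,0\right)$-semi-smooth; - if $n<m$, it is $\left(1+\frac{2n-2}{m},\,0\right)$-semi-smooth. In both cases the witnessing mixed strategy has every player choose each machine with probability $\frac1m$.
   Context: An instance of the Balancing with Conflicts (BwC) game consists of: - players $N=\{1,\dots,n\}$; - machines $M=\{1,\dots,m\}$; - a simple undirected graph $G=(N,E)$. Each player chooses one machine, so a state is $\vec s\in M^n$. Let $X_k(\vec s)=\{i:s_i=k\}$ and $x_k(\vec s)=|X_k(\vec s)|$. For $X\subseteq N$, $e(X)$ is the number of edges of $G$ with both endpoints in $X$. For a player $i$, $e(\{i\},X)$ is the number of neighbours of $i$ in $X$. The cost of player $i$ with $s_i=k$ is $c_i(\vec s)=x_k(\vec s)+e(\{i\},X_k(\vec s))$. The social cost is $$c(\vec s)=\sum_ic_i(\vec s)=\sum_{k=1}^m\big(x_k(\vec s)^2+2e(X_k(\vec s))\big),$$ and $\vec s^*$ is a state minimizing $c$. A cost-minimization game is $(\lambda,\mu)$-semi-smooth if there exist probability distributions $\sigma_i$ over the strategies of each player $i$ such that for every state $\vec s$, $$\sum_{i\in N}\mathbf E_{s_i'\sim\sigma_i}[c_i(s_i',\vec s_{-i})]\le\lambda c(\vec s^* )+\mu c(\vec s).$$ *)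

theory Defs
  imports "HOL-Probability.Probability"
begin

text \<open>Balancing with Conflicts. Players are 0..n-1, machines are 0..m-1.
  The conflict graph is a simple undirected graph on the players, given by a
  symmetric irreflexive relation E.\<close>

definition simple_graph :: "(nat \<Rightarrow> nat \<Rightarrow> bool) \<Rightarrow> bool" where
  "simple_graph E \<longleftrightarrow> (\<forall>i j. E i j \<longrightarrow> E j i) \<and> (\<forall>i. \<not> E i i)"

definition bwc_states :: "nat \<Rightarrow> nat \<Rightarrow> (nat \<Rightarrow> nat) set" where
  "bwc_states n m = {s. \<forall>i<n. s i < m}"

definition load_set :: "nat \<Rightarrow> (nat \<Rightarrow> nat) \<Rightarrow> nat \<Rightarrow> nat set" where
  "load_set n s k = {i. i < n \<and> s i = k}"

definition nbrs_in :: "(nat \<Rightarrow> nat \<Rightarrow> bool) \<Rightarrow> nat \<Rightarrow> nat set \<Rightarrow> nat" where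
  "nbrs_in E i X = card {j \<in> X. E i j}"

definition bwc_cost :: "nat \<Rightarrow> (nat \<Rightarrow> nat \<Rightarrow> bool) \<Rightarrow> (nat \<Rightarrow> nat) \<Rightarrow> nat \<Rightarrow> real" where
  "bwc_cost n E s i = real (card (load_set n s (s i))) + real (nbrs_in E i (load_set n s (s i)))"

definition bwc_social_cost :: "nat \<Rightarrow> (nat \<Rightarrow> nat \<Rightarrow> bool) \<Rightarrow> (nat \<Rightarrow> nat) \<Rightarrow> real" where
  "bwc_social_cost n E s = (\<Sum>i<n. bwc_cost n E s i)"

definition bwc_semi_smooth_with ::
  "nat \<Rightarrow> nat \<Rightarrow> (nat \<Rightarrow> nat \<Rightarrow> bool) \<Rightarrow> (nat \<Rightarrow> nat pmf) \<Rightarrow> real \<Rightarrow> real \<Rightarrow> bool" where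
  "bwc_semi_smooth_with n m E \<sigma> lam mu \<longleftrightarrow>
     (\<forall>i<n. set_pmf (\<sigma> i) \<subseteq> {..<m}) \<and>
     (\<forall>s_opt \<in> bwc_states n m.
        (\<forall>t \<in> bwc_states n m. bwc_social_cost n E s_opt \<le> bwc_social_cost n E t) \<longrightarrow>
        (\<forall>s \<in> bwc_states n m.
           (\<Sum>i<n. measure_pmf.expectation (\<sigma> i) (\<lambda>k. bwc_cost n E (s(i := k)) i))
             \<le> lam * bwc_social_cost n E s_opt + mu * bwc_social_cost n E s))"

definition bwc_semi_smooth ::
  "nat \<Rightarrow> nat \<Rightarrow> (nat \<Rightarrow> nat \<Rightarrow> bool) \<Rightarrow> real \<Rightarrow> real \<Rightarrow> bool" where
  "bwc_semi_smooth n m E lam mu \<longleftrightarrow> (\<exists>\<sigma>. bwc_semi_smooth_with n m E \<sigma> lam mu)"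

end

theory Submission
  imports Defs
begin

text \<open>If player i deviates to a uniformly random machine, it meets on average (n - 1)/m other
  players and deg(i)/m neighbours, so the left-hand side of the semi-smoothness inequality is
  (n(n + m - 1) + \<Sum> deg)/m, independently of the current state s. Against an arbitrary state t,
  each neighbour of i either shares i's machine or lies outside i's machine, so
  \<Sum> deg \<le> F + n^2 - Q, where Q = \<Sum> x_k^2 and F = 2 \<Sum> e(X_k) are the two parts of c(t).
  The claim then reduces to a lower bound on Q: Q \<ge> n^2/m by Cauchy-Schwarz when n \<ge> m,
  and Q \<ge> n when n < m.\<close>

definition degree :: "nat \<Rightarrow> (nat \<Rightarrow> nat \<Rightarrow> bool) \<Rightarrow> nat \<Rightarrow> nat" where
  "degree n E i = card {j. j < n \<and> E i j}"

definition load_cost :: "nat \<Rightarrow> (nat \<Rightarrow> nat) \<Rightarrow> real" where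
  "load_cost n t = (\<Sum>i<n. real (card (load_set n t (t i))))"

definition conflict_cost :: "nat \<Rightarrow> (nat \<Rightarrow> nat \<Rightarrow> bool) \<Rightarrow> (nat \<Rightarrow> nat) \<Rightarrow> real" where
  "conflict_cost n E t = (\<Sum>i<n. real (nbrs_in E i (load_set n t (t i))))"

lemma bwc_social_cost_split:
  "bwc_social_cost n E t = load_cost n t + conflict_cost n E t"
  by (simp add: bwc_social_cost_def bwc_cost_def load_cost_def conflict_cost_def sum.distrib)

lemma sum_card_fibres:
  fixes f :: "'a \<Rightarrow> nat"
  assumes "finite A" and "f ` A \<subseteq> {..<m}"
  shows "(\<Sum>k<m. card {j\<in>A. f j = k}) = card A"
  using sum.group[OF assms(1) finite_lessThan[of m] assms(2), of "\<lambda>_. 1::nat"] by simp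

lemma sum_card_load_set:
  assumes "t \<in> bwc_states n m"
  shows "(\<Sum>k<m. card (load_set n t k)) = n"
  using sum_card_fibres[of "{..<n}" t m] assms
  by (simp add: load_set_def bwc_states_def image_subset_iff)

lemma load_cost_eq_sum_squares:
  assumes "t \<in> bwc_states n m"
  shows "load_cost n t = (\<Sum>k<m. real (card (load_set n t k)) ^ 2)"
proof -
  have "load_cost n t = (\<Sum>k<m. \<Sum>i\<in>{i\<in>{..<n}. t i = k}. real (card (load_set n t (t i))))"
    unfolding load_cost_def
    by (rule sum.group[symmetric]) (use assms in \<open>auto simp: bwc_states_def\<close>)
  also have "\<dots> = (\<Sum>k<m. real (card (load_set n t k)) ^ 2)"
  proof (intro sum.cong refl)
    fix k
    have X: "{i\<in>{..<n}. t i = k} = load_set n t k" by (auto simp: load_set_def)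
    show "(\<Sum>i\<in>{i\<in>{..<n}. t i = k}. real (card (load_set n t (t i))))
        = real (card (load_set n t k)) ^ 2"
      by (simp add: X power2_eq_square load_set_def)
  qed
  finally show ?thesis .
qed

lemma load_cost_ge_square_div:
  assumes "t \<in> bwc_states n m"
  shows "real n ^ 2 / real m \<le> load_cost n t"
proof -
  have "real n ^ 2 = (\<Sum>k<m. real (card (load_set n t k))) ^ 2"
    using sum_card_load_set[OF assms] by (simp flip: of_nat_sum)
  also have "\<dots> \<le> load_cost n t * real m"
    using sum_squared_le_sum_of_squares[of "\<lambda>k. real (card (load_set n t k))" "{..<m}"]
    by (simp add: load_cost_eq_sum_squares[OF assms])
  finally show ?thesis
    by (cases "m = 0") (simp_all add: load_cost_def sum_nonneg divide_le_eq)
qed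

lemma load_cost_ge_players: "real n \<le> load_cost n t"
proof -
  have "card (load_set n t (t i)) \<ge> 1" if "i < n" for i
    using that card_0_eq[of "load_set n t (t i)"] by (fastforce simp: load_set_def)
  then have "(\<Sum>i<n. (1::real)) \<le> load_cost n t"
    unfolding load_cost_def by (intro sum_mono) simp
  then show ?thesis by simp
qed

lemma degree_le_conflicts_plus_others:
  "degree n E i \<le> nbrs_in E i (load_set n t k) + (n - card (load_set n t k))"
proof -
  let ?X = "load_set n t k"
  have X: "?X \<subseteq> {..<n}" by (auto simp: load_set_def)
  then have "finite ?X" by (rule finite_subset) simp
  then have "degree n E i \<le> card ({j\<in>?X. E i j} \<union> ({..<n} - ?X))"
    unfolding degree_def by (intro card_mono) auto
  also have "\<dots> \<le> card {j\<in>?X. E i j} + card ({..<n} - ?X)"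
    by (rule card_Un_le)
  also have "card ({..<n} - ?X) = n - card ?X"
    using X by (simp add: card_Diff_subset finite_subset)
  finally show ?thesis by (simp add: nbrs_in_def)
qed

lemma sum_degree_le:
  "(\<Sum>i<n. real (degree n E i)) \<le> conflict_cost n E t + real n * real n - load_cost n t"
proof -
  have "card (load_set n t k) \<le> n" for k
    using card_mono[of "{..<n}" "load_set n t k"] by (auto simp: load_set_def)
  then have "real (degree n E i)
      \<le> real (nbrs_in E i (load_set n t (t i))) + (real n - real (card (load_set n t (t i))))" for i
    using degree_le_conflicts_plus_others[of n E i t "t i"]
    by (metis of_nat_add of_nat_diff of_nat_le_iff)
  then have "(\<Sum>i<n. real (degree n E i))
      \<le> (\<Sum>i<n. real (nbrs_in E i (load_set n t (t i))) + (real n - real (card (load_set n t (t i)))))"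
    by (intro sum_mono)
  then show ?thesis
    by (simp add: conflict_cost_def load_cost_def sum.distrib sum_subtractf)
qed

lemma sum_bwc_cost_over_machines:
  assumes "simple_graph E" and "i < n" and "s \<in> bwc_states n m"
  shows "(\<Sum>k<m. bwc_cost n E (s(i := k)) i) = real (m + (n - 1)) + real (degree n E i)"
proof -
  have loop_free: "\<not> E i i" using assms(1) by (simp add: simple_graph_def)
  have onto_others: "s ` ({..<n} - {i}) \<subseteq> {..<m}"
    and onto_nbrs: "s ` {j. j < n \<and> E i j} \<subseteq> {..<m}"
    using assms(3) by (auto simp: bwc_states_def)
  have X: "load_set n (s(i := k)) k = insert i {j\<in>{..<n} - {i}. s j = k}" for k
    using assms(2) by (auto simp: load_set_def)
  have N: "{j\<in>load_set n (s(i := k)) k. E i j} = {j\<in>{j. j < n \<and> E i j}. s j = k}" for k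
    using loop_free by (auto simp: X)
  have "(\<Sum>k<m. bwc_cost n E (s(i := k)) i)
      = real m + real (\<Sum>k<m. card {j\<in>{..<n} - {i}. s j = k})
        + real (\<Sum>k<m. card {j\<in>{j. j < n \<and> E i j}. s j = k})"
    unfolding bwc_cost_def nbrs_in_def N fun_upd_same
    by (simp add: X sum.distrib flip: of_nat_sum)
  also have "\<dots> = real (m + (n - 1)) + real (degree n E i)"
    using sum_card_fibres[of "{..<n} - {i}" s m] sum_card_fibres[of "{j. j < n \<and> E i j}" s m]
      onto_others onto_nbrs assms(2)
    by (auto simp: sum.distrib degree_def)
  finally show ?thesis .
qed

lemma sum_uniform_deviation_cost:
  assumes "simple_graph E" and "m \<ge> 1" and "s \<in> bwc_states n m"
  shows "(\<Sum>i<n. measure_pmf.expectation (pmf_of_set {..<m}) (\<lambda>k. bwc_cost n E (s(i := k)) i))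
       = (real n * (real n + real m - 1) + (\<Sum>i<n. real (degree n E i))) / real m"
proof -
  have "(\<Sum>i<n. measure_pmf.expectation (pmf_of_set {..<m}) (\<lambda>k. bwc_cost n E (s(i := k)) i))
      = (\<Sum>i<n. (real (m + (n - 1)) + real (degree n E i)) / real m)"
    using assms(2) sum_bwc_cost_over_machines[OF assms(1) _ assms(3)]
    by (intro sum.cong refl) (simp add: integral_pmf_of_set lessThan_empty_iff)
  also have "\<dots> = (real n * (real n + real m - 1) + (\<Sum>i<n. real (degree n E i))) / real m"
    using assms(2) by (cases n) (simp_all add: sum.distrib algebra_simps flip: sum_divide_distrib)
  finally show ?thesis .
qed

lemma sum_uniform_deviation_cost_le:
  assumes "simple_graph E" and "m \<ge> 1" and "s \<in> bwc_states n m"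
  shows "(\<Sum>i<n. measure_pmf.expectation (pmf_of_set {..<m}) (\<lambda>k. bwc_cost n E (s(i := k)) i))
       \<le> (real n * (2 * real n + real m - 1) - load_cost n t + conflict_cost n E t) / real m"
  unfolding sum_uniform_deviation_cost[OF assms]
  using sum_degree_le[of n E t] assms(2)
  by (intro divide_right_mono) (simp_all add: algebra_simps)

lemma bwc_semi_smooth_with_no_players: "bwc_semi_smooth_with 0 m E \<sigma> lam mu"
  by (simp add: bwc_semi_smooth_with_def bwc_social_cost_def)

lemma bwc_semi_smooth_with_uniformI:
  assumes "simple_graph E" and "m \<ge> 1" and "1 / real m \<le> lam"
    and load_bound: "\<And>t. t \<in> bwc_states n m \<Longrightarrow>
        real n * (2 * real n + real m - 1) / real m \<le> (lam + 1 / real m) * load_cost n t"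
  shows "bwc_semi_smooth_with n m E (\<lambda>i. pmf_of_set {..<m}) lam 0"
  unfolding bwc_semi_smooth_with_def
proof (intro conjI allI impI ballI)
  show "set_pmf (pmf_of_set {..<m}) \<subseteq> {..<m}"
    using assms(2) by (simp add: set_pmf_of_set lessThan_empty_iff)
next
  fix t s assume t: "t \<in> bwc_states n m" and s: "s \<in> bwc_states n m"
  let ?Q = "load_cost n t" and ?F = "conflict_cost n E t"
  have "?F / real m \<le> lam * ?F"
    using mult_right_mono[OF assms(3), of ?F]
    by (simp add: conflict_cost_def sum_nonneg)
  then have "(real n * (2 * real n + real m - 1) - ?Q + ?F) / real m \<le> lam * (?Q + ?F)"
    using load_bound[OF t] by (simp add: diff_divide_distrib add_divide_distrib algebra_simps)
  then show "(\<Sum>i<n. measure_pmf.expectation (pmf_of_set {..<m}) (\<lambda>k. bwc_cost n E (s(i := k)) i))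
      \<le> lam * bwc_social_cost n E t + 0 * bwc_social_cost n E s"
    using sum_uniform_deviation_cost_le[OF assms(1,2) s, of t]
    by (simp add: bwc_social_cost_split)
qed

lemma bwc_semi_smooth_with_uniform_many_players:
  assumes "simple_graph E" and "1 \<le> m" and "m \<le> n"
  shows "bwc_semi_smooth_with n m E (\<lambda>i. pmf_of_set {..<m})
           (2 - 1 / real m + (real m - 1) / real n) 0"
proof (rule bwc_semi_smooth_with_uniformI[OF assms(1,2)])
  let ?lam = "2 - 1 / real m + (real m - 1) / real n"
  have n: "real n > 0" and m: "real m \<ge> 1" using assms(2,3) by simp_all
  then have "1 / real m \<le> 1" and "(real m - 1) / real n \<ge> 0" by simp_all
  then show "1 / real m \<le> ?lam" by linarith
  fix t assume t: "t \<in> bwc_states n m"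
  have "real n * (2 * real n + real m - 1) / real m
      = (2 * real n + real m - 1) / real n * (real n ^ 2 / real m)"
    using n m by (simp add: field_simps power2_eq_square)
  also have "\<dots> \<le> (2 * real n + real m - 1) / real n * load_cost n t"
    using load_cost_ge_square_div[OF t] m n by (intro mult_left_mono) simp_all
  also have "(2 * real n + real m - 1) / real n = ?lam + 1 / real m"
    using n by (simp add: field_simps)
  finally show "real n * (2 * real n + real m - 1) / real m \<le> (?lam + 1 / real m) * load_cost n t" .
qed

lemma bwc_semi_smooth_with_uniform_few_players:
  assumes "simple_graph E" and "n < m"
  shows "bwc_semi_smooth_with n m E (\<lambda>i. pmf_of_set {..<m}) (1 + (2 * real n - 2) / real m) 0"
proof (cases "n = 0")
  case False
  let ?lam = "1 + (2 * real n - 2) / real m"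
  have n: "real n \<ge> 1" and m: "real m > 0" using False assms(2) by simp_all
  show ?thesis
  proof (rule bwc_semi_smooth_with_uniformI[OF assms(1)])
    show "1 \<le> m" and "1 / real m \<le> ?lam" using n m assms(2) by (simp_all add: field_simps)
    fix t
    have "real n * (2 * real n + real m - 1) / real m = (2 * real n + real m - 1) / real m * real n"
      by simp
    also have "\<dots> \<le> (2 * real n + real m - 1) / real m * load_cost n t"
      using load_cost_ge_players[of n t] n m by (intro mult_left_mono) simp_all
    also have "(2 * real n + real m - 1) / real m = ?lam + 1 / real m"
      using m by (simp add: field_simps)
    finally show "real n * (2 * real n + real m - 1) / real m \<le> (?lam + 1 / real m) * load_cost n t" .
  qed
qed (simp add: bwc_semi_smooth_with_no_players)

theorem theorem4:
  fixes n m :: nat and E :: "nat \<Rightarrow> nat \<Rightarrow> bool"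
  assumes "m \<ge> 1" and "simple_graph E"
  shows "(n \<ge> m \<longrightarrow>
            bwc_semi_smooth_with n m E (\<lambda>i. pmf_of_set {..<m})
              (2 - 1 / real m + (real m - 1) / real n) 0)
       \<and> (n < m \<longrightarrow>
            bwc_semi_smooth_with n m E (\<lambda>i. pmf_of_set {..<m})
              (1 + (2 * real n - 2) / real m) 0)"
  using bwc_semi_smooth_with_uniform_many_players[OF assms(2,1)]
    bwc_semi_smooth_with_uniform_few_players[OF assms(2)]
  by blast

end
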